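(* Let $\Phi$ denote the standard normal cdf and fix $\sigma>0$ and $\eta\in(0,1/6)$. For each pair $(n,d)$ let $S_1,\dots,S_n$ be independent real random variables with common cdf $G_d$. Assume there exist two sequences $\alpha^l_{n,d}$ and $\alpha^u_{n,d}$, both tending to $0$ as $n,d\to\infty$, such that for all $s\in[-d^\eta,d^\eta]$, $$(1+\alpha^l_{n,d})\,\Phi(s)\le G_d(s)\le (1+\alpha^u_{n,d})\,\Phi(s).$$ Let $S_{(1)}\le\dots\le S_{(n)}$ be the order statistics of $S_1,\dots,S_n$ and define $$T_{n,d}=\sum_{\ell=2}^n e^{-\sigma\sqrt d\,(S_{(\ell)}-S_{(1)})}.$$ Then, if $n,d\to\infty$ with $\frac{\log n}{d^{2\eta}}\to 0$, we have $E(T_{n,d}\mid S_{(1)})=o_p(1)$, i.e. $E(T_{n,d}\mid S_{(1)})\to 0$ in probability. *)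

theory Defs
  imports "HOL-Probability.Probability"
begin

definition std_normal_cdf :: "real \<Rightarrow> real" where
  "std_normal_cdf s = cdf (density lborel std_normal_density) s"

text \<open>Order statistics of the sample X 0, ..., X (n-1): order_stat X n l is the l-th
  smallest value (1-indexed, 1 \<le> l \<le> n).\<close>
definition order_stat :: "(nat \<Rightarrow> real) \<Rightarrow> nat \<Rightarrow> nat \<Rightarrow> real" where
  "order_stat X n l = sort (map X [0..<n]) ! (l - 1)"

definition T_stat :: "real \<Rightarrow> nat \<Rightarrow> nat \<Rightarrow> (nat \<Rightarrow> real) \<Rightarrow> real" where
  "T_stat \<sigma> n d X = (\<Sum>l = 2..n. exp (- \<sigma> * sqrt (real d) * (order_stat X n l - order_stat X n 1)))"

end

theory Submission
  imports Defs "HOL-Real_Asymp.Real_Asymp"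
begin

text \<open>
  Since T \<ge> 0, Markov's inequality for the conditional expectation reduces the claim to
  E T \<rightarrow> 0. Put c = \<sigma> sqrt d and cut [-D, D], D = d powr \<eta>, into cells a r = -D + r h of
  width h = 2 ln n / c. Sample points more than h above the minimum contribute at most
  n exp (-c h) = 1/n. If the minimum lies in the cell (a r, a (r+1)], every point exceeds a r and
  those within h of the minimum lie in (a r, a (r+2)]; their number minus one is at most the
  number of ordered pairs of points there, whose expected value (jointly with the event that all
  points exceed a r) is n (n-1) (G (a (r+2)) - G (a r))^2 (1 - G (a r)) ^ (n-2).
  Since ln \<Phi> is Lipschitz on [-D, D] with constant 1 + 2 D and h D \<rightarrow> 0, the hypothesis on G
  gives G (a (r+2)) \<le> (1 + \<epsilon>) G (a r) with \<epsilon> \<rightarrow> 0, and comparing the sum over r with the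
  integral of x exp (-n x) shows that it is O(\<epsilon>). Finally, T < n, the minimum lies below -D with
  probability at most n G (-D) \<le> n (1 + \<alpha>u) exp (-D^2/2), and above 0 with probability at
  most (5/6) ^ n; both contributions vanish because ln n = o(D^2).
\<close>

section \<open>The standard normal distribution\<close>

abbreviation "\<Phi> \<equiv> std_normal_cdf"
abbreviation "\<phi> \<equiv> std_normal_density"

lemma real_distribution_std_normal: "real_distribution (density lborel \<phi>)"
  by (simp add: real_distribution_def real_distribution_axioms_def prob_space_normal_density)

lemma std_normal_cdf_diff:
  assumes "y \<le> x"
  shows "\<Phi> x - \<Phi> y = (LBINT t=y..x. \<phi> t)"
proof (cases "y = x")
  case False
  then have "y < x" using assms by simp
  interpret real_distribution "density lborel \<phi>" by (rule real_distribution_std_normal)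
  have int: "integrable lborel (\<lambda>t. indicator {y<..x} t *\<^sub>R \<phi> t)"
    by (intro integrable_mult_indicator) auto
  have "emeasure (density lborel \<phi>) {y<..x} = (\<integral>\<^sup>+ t. ennreal (indicator {y<..x} t *\<^sub>R \<phi> t) \<partial>lborel)"
    by (simp add: emeasure_density) (intro nn_integral_cong, auto simp: indicator_def)
  also have "\<dots> = ennreal (\<integral> t. indicator {y<..x} t *\<^sub>R \<phi> t \<partial>lborel)"
    using int by (intro nn_integral_eq_integral) auto
  finally have "measure (density lborel \<phi>) {y<..x} = (LBINT t:{y<..x}. \<phi> t)"
    unfolding measure_def set_lebesgue_integral_def by (simp add: integral_nonneg)
  then show ?thesis
    using cdf_diff_eq[OF \<open>y < x\<close>] assms
    by (simp add: std_normal_cdf_def interval_integral_Ioc)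
qed simp

lemma std_normal_cdf_has_real_derivative: "(\<Phi> has_real_derivative \<phi> x) (at x)"
proof -
  define a where "a = - \<bar>x\<bar> - 1"
  define b where "b = \<bar>x\<bar> + 1"
  have Phi_eq: "\<Phi> u = \<Phi> 0 + (LBINT t=ereal 0..ereal u. \<phi> t)" for u
    using std_normal_cdf_diff[of 0 u] std_normal_cdf_diff[of u 0]
    by (cases "0 \<le> u")
      (simp_all add: zero_ereal_def interval_integral_endpoints_reverse[of "ereal 0" "ereal u"])
  have cont: "continuous_on {a..b} \<phi>"
    unfolding std_normal_density_def by (intro continuous_intros) auto
  have "((\<lambda>u. LBINT y=ereal 0..ereal u. \<phi> y) has_vector_derivative (\<phi> x)) (at x within {a..b})"
    by (rule interval_integral_FTC2[OF _ _ cont]) (auto simp: a_def b_def)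
  then have "((\<lambda>u. \<Phi> 0 + (LBINT y=ereal 0..ereal u. \<phi> y)) has_vector_derivative (\<phi> x))
      (at x within {a..b})"
    by (auto intro!: derivative_eq_intros)
  then have "(\<Phi> has_vector_derivative (\<phi> x)) (at x within {a<..<b})"
    unfolding Phi_eq[symmetric] by (rule has_vector_derivative_within_subset) auto
  then have "(\<Phi> has_vector_derivative (\<phi> x)) (at x)"
    by (subst (asm) has_vector_derivative_within_open) (auto simp: a_def b_def)
  then show ?thesis by (simp add: has_real_derivative_iff_has_vector_derivative)
qed

lemma std_normal_density_has_real_derivative: "(\<phi> has_real_derivative (- x * \<phi> x)) (at x)"
proof -
  have "sqrt (2*pi) * sqrt (2*pi) = 2*pi" by simp
  then show ?thesis unfolding std_normal_density_def
    by (auto intro!: derivative_eq_intros simp: power2_eq_square field_simps)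
qed

lemma std_normal_cdf_at_bot: "(\<Phi> \<longlongrightarrow> 0) at_bot"
proof -
  interpret real_distribution "density lborel \<phi>" by (rule real_distribution_std_normal)
  show ?thesis unfolding std_normal_cdf_def[abs_def] by (rule cdf_lim_at_bot)
qed

lemma std_normal_cdf_mono: "x \<le> y \<Longrightarrow> \<Phi> x \<le> \<Phi> y"
proof -
  interpret real_distribution "density lborel \<phi>" by (rule real_distribution_std_normal)
  show "x \<le> y \<Longrightarrow> ?thesis" unfolding std_normal_cdf_def by (rule cdf_nondecreasing)
qed

lemma std_normal_density_pos: "0 < \<phi> x"
  by (simp add: normal_density_pos)

lemma std_normal_density_le_at_0: "\<phi> x \<le> \<phi> 0"
  unfolding std_normal_density_def by (intro mult_left_mono) auto

lemma nonneg_if_tendsto_0_at_bot_mono: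
  fixes f :: "real \<Rightarrow> real"
  assumes "(f \<longlongrightarrow> 0) at_bot" and "\<And>y. y \<le> x \<Longrightarrow> f y \<le> f x"
  shows "0 \<le> f x"
proof (rule tendsto_le[OF _ tendsto_const assms(1)])
  show "\<forall>\<^sub>F y in at_bot. f y \<le> f x"
    using assms(2) by (auto simp: eventually_at_bot_linorder)
qed simp

lemma mills_ratio_lower:
  assumes "x \<le> 0"
  shows "\<phi> x \<le> (1 - x) * \<Phi> x"
proof -
  define f where "f = (\<lambda>u. \<Phi> u - \<phi> u / (1 - u))"
  have "0 \<le> f x"
  proof (rule nonneg_if_tendsto_0_at_bot_mono[of f x])
    have "((\<lambda>u. \<phi> u / (1 - u)) \<longlongrightarrow> 0) at_bot"
      unfolding std_normal_density_def by real_asymp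
    from tendsto_diff[OF std_normal_cdf_at_bot this] show "(f \<longlongrightarrow> 0) at_bot"
      unfolding f_def by simp
    fix y assume "y \<le> x"
    show "f y \<le> f x"
    proof (rule DERIV_nonneg_imp_nondecreasing[OF \<open>y \<le> x\<close>])
      fix u assume "y \<le> u" "u \<le> x"
      then have u: "u \<le> 0" using assms by simp
      have "(f has_real_derivative (\<phi> u - ((- u * \<phi> u) * (1 - u) + \<phi> u) / (1 - u)^2)) (at u)"
        unfolding f_def using u
        by (auto intro!: derivative_eq_intros std_normal_cdf_has_real_derivative
            std_normal_density_has_real_derivative simp: power2_eq_square)
      moreover have "(- u * \<phi> u) * (1 - u) + \<phi> u \<le> \<phi> u * (1 - u)^2"
      proof -
        have "(- u * \<phi> u) * (1 - u) + \<phi> u = \<phi> u * (1 - u + u^2)"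
          by (simp add: algebra_simps power2_eq_square)
        also have "\<dots> \<le> \<phi> u * (1 - u)^2"
          using u by (intro mult_left_mono) (auto simp: power2_eq_square algebra_simps)
        finally show ?thesis .
      qed
      then have "0 \<le> \<phi> u - ((- u * \<phi> u) * (1 - u) + \<phi> u) / (1 - u)^2"
        using u by (simp add: field_simps)
      ultimately show "\<exists>d. (f has_real_derivative d) (at u) \<and> 0 \<le> d" by blast
    qed
  qed
  then show ?thesis using assms unfolding f_def by (simp add: field_simps)
qed

lemma mills_ratio_upper:
  assumes "x < 0"
  shows "\<Phi> x \<le> \<phi> x / (- x)"
proof -
  define f where "f = (\<lambda>u. \<phi> u / (- u) - \<Phi> u)"
  have "0 \<le> f x"
  proof (rule nonneg_if_tendsto_0_at_bot_mono[of f x])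
    have "((\<lambda>u. \<phi> u / (- u)) \<longlongrightarrow> 0) at_bot"
      unfolding std_normal_density_def by real_asymp
    from tendsto_diff[OF this std_normal_cdf_at_bot] show "(f \<longlongrightarrow> 0) at_bot"
      unfolding f_def by simp
    fix y assume "y \<le> x"
    show "f y \<le> f x"
    proof (rule DERIV_nonneg_imp_nondecreasing[OF \<open>y \<le> x\<close>])
      fix u assume "y \<le> u" "u \<le> x"
      then have u: "u < 0" using assms by simp
      have "(f has_real_derivative (((- u * \<phi> u) * (- u) + \<phi> u) / (- u)^2 - \<phi> u)) (at u)"
        unfolding f_def using u
        by (auto intro!: derivative_eq_intros std_normal_cdf_has_real_derivative
            std_normal_density_has_real_derivative simp: power2_eq_square) (simp add: field_simps)
      moreover have "((- u * \<phi> u) * (- u) + \<phi> u) / (- u)^2 - \<phi> u = \<phi> u / u^2"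
        using u by (simp add: field_simps power2_eq_square)
      ultimately show "\<exists>d. (f has_real_derivative d) (at u) \<and> 0 \<le> d" by fastforce
    qed
  qed
  then show ?thesis unfolding f_def by simp
qed

lemma std_normal_cdf_pos: "0 < \<Phi> x"
proof -
  have "0 < (1 - min x 0) * \<Phi> (min x 0)"
    using mills_ratio_lower[of "min x 0"] std_normal_density_pos[of "min x 0"] by linarith
  then have "0 < \<Phi> (min x 0)" by (simp add: zero_less_mult_iff)
  then show ?thesis using std_normal_cdf_mono[of "min x 0" x] by simp
qed

lemma std_normal_density_le_cdf: "\<phi> x \<le> (1 + \<bar>x\<bar>) * \<Phi> x"
proof (cases "x \<le> 0")
  case False
  have "\<phi> x \<le> \<phi> 0" by (rule std_normal_density_le_at_0)
  also have "\<dots> \<le> \<Phi> 0" using mills_ratio_lower[of 0] by simp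
  also have "\<dots> \<le> \<Phi> x" using False by (intro std_normal_cdf_mono) simp
  also have "\<dots> \<le> (1 + \<bar>x\<bar>) * \<Phi> x" using std_normal_cdf_pos[of x] by simp
  finally show ?thesis .
qed (use mills_ratio_lower in simp)

text \<open>Since \<open>\<phi> u \<le> (1 + |u|) \<Phi> u\<close>, \<open>ln \<Phi>\<close> is Lipschitz on \<open>[a, b]\<close> with constant \<open>1 + |a| + |b|\<close>.\<close>

lemma std_normal_cdf_le_exp_mult:
  assumes "a \<le> b"
  shows "\<Phi> b \<le> \<Phi> a * exp ((b - a) * (1 + \<bar>a\<bar> + \<bar>b\<bar>))"
proof -
  define K where "K = 1 + \<bar>a\<bar> + \<bar>b\<bar>"
  define L where "L u = ln (\<Phi> u) - K * u" for u
  have "L b \<le> L a"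
  proof (rule DERIV_nonpos_imp_nonincreasing[OF assms])
    fix u assume u: "a \<le> u" "u \<le> b"
    have "(L has_real_derivative (\<phi> u / \<Phi> u - K)) (at u)"
      unfolding L_def using std_normal_cdf_pos[of u]
      by (auto intro!: derivative_eq_intros std_normal_cdf_has_real_derivative)
    moreover have "\<phi> u \<le> K * \<Phi> u"
    proof -
      have "1 + \<bar>u\<bar> \<le> K" using u unfolding K_def by linarith
      then have "(1 + \<bar>u\<bar>) * \<Phi> u \<le> K * \<Phi> u"
        using std_normal_cdf_pos[of u] by (intro mult_right_mono) auto
      then show ?thesis using std_normal_density_le_cdf[of u] by linarith
    qed
    ultimately show "\<exists>y. (L has_real_derivative y) (at u) \<and> y \<le> 0"
      using std_normal_cdf_pos[of u] by (auto simp: field_simps)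
  qed
  then have "exp (ln (\<Phi> b)) \<le> exp (ln (\<Phi> a) + K * (b - a))"
    unfolding L_def by (simp add: algebra_simps)
  then show ?thesis using std_normal_cdf_pos[of a] std_normal_cdf_pos[of b] unfolding K_def
    by (simp add: exp_add mult.commute)
qed

lemma std_normal_cdf_tail_le:
  assumes "1 \<le> t"
  shows "\<Phi> (- t) \<le> exp (- t\<^sup>2 / 2)"
proof -
  have "\<Phi> (- t) \<le> \<phi> (- t) / t" using mills_ratio_upper[of "-t"] assms by simp
  also have "\<dots> \<le> \<phi> (- t)" using assms std_normal_density_pos[of "-t"] by (simp add: divide_le_eq)
  also have "\<dots> \<le> exp (- t\<^sup>2 / 2)" unfolding std_normal_density_def
    using pi_gt3 by (simp add: divide_le_eq real_le_rsqrt)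
  finally show ?thesis .
qed

lemma std_normal_cdf_0_ge: "1/3 \<le> \<Phi> 0"
proof -
  have "sqrt (2 * pi) \<le> sqrt 9" using pi_less_4 by (intro real_sqrt_le_mono) simp
  then have "1/3 \<le> \<phi> 0" unfolding std_normal_density_def by (simp add: field_simps)
  then show ?thesis using mills_ratio_lower[of 0] by simp
qed

definition cdf_ratio_slack :: "real \<Rightarrow> real \<Rightarrow> real \<Rightarrow> real \<Rightarrow> real" where
  "cdf_ratio_slack h D al au = max 0 ((1 + au) / (1 + al) * exp (2 * h * (1 + 2 * D)) - 1)"

lemma cdf_shift_le:
  fixes G :: "real \<Rightarrow> real"
  assumes bounds: "\<And>s. - D \<le> s \<Longrightarrow> s \<le> D \<Longrightarrow> (1 + al) * \<Phi> s \<le> G s \<and> G s \<le> (1 + au) * \<Phi> s"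
    and "-1 < al" "-1 < au" "0 \<le> h" "- D \<le> s" "s + 2 * h \<le> D" "0 \<le> G s"
  shows "G (s + 2 * h) \<le> (1 + cdf_ratio_slack h D al au) * G s"
proof -
  have abs_le: "\<bar>s\<bar> \<le> D" "\<bar>s + 2 * h\<bar> \<le> D" using assms by auto
  have "G (s + 2 * h) \<le> (1 + au) * \<Phi> (s + 2 * h)" using bounds[of "s + 2 * h"] assms by simp
  also have "\<dots> \<le> (1 + au) * (\<Phi> s * exp (2 * h * (1 + \<bar>s\<bar> + \<bar>s + 2 * h\<bar>)))"
    using std_normal_cdf_le_exp_mult[of s "s + 2 * h"] assms by (intro mult_left_mono) auto
  also have "\<dots> \<le> (1 + au) * (\<Phi> s * exp (2 * h * (1 + 2 * D)))"
  proof -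
    have "2 * h * (1 + \<bar>s\<bar> + \<bar>s + 2 * h\<bar>) \<le> 2 * h * (1 + 2 * D)"
      using abs_le \<open>0 \<le> h\<close> by (intro mult_left_mono) auto
    then show ?thesis using assms std_normal_cdf_pos[of s] by (intro mult_left_mono) auto
  qed
  also have "\<dots> = ((1 + au) / (1 + al) * exp (2 * h * (1 + 2 * D))) * ((1 + al) * \<Phi> s)"
    using assms by (simp add: field_simps)
  also have "\<dots> \<le> ((1 + au) / (1 + al) * exp (2 * h * (1 + 2 * D))) * G s"
    using bounds[of s] assms by (intro mult_left_mono) auto
  also have "\<dots> \<le> (1 + cdf_ratio_slack h D al au) * G s"
    unfolding cdf_ratio_slack_def using assms by (intro mult_right_mono) auto
  finally show ?thesis .
qed

section \<open>A telescoping estimate\<close>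

lemma xexp_antiderivative:
  fixes l :: real
  assumes "l \<noteq> 0"
  shows "((\<lambda>x. - (x + 1 / l) * exp (- l * x) / l) has_real_derivative (x * exp (- l * x))) (at x)"
proof -
  have "((\<lambda>x. - (x + 1 / l) * exp (- l * x) / l) has_real_derivative
     (((- (1 + 0) * exp (- l * x) + exp (- l * x) * (0 * x + 1 * - l) * - (x + 1 / l)) * l
       - - (x + 1 / l) * exp (- l * x) * 0) / (l * l))) (at x)"
    using assms by (auto intro!: derivative_eq_intros)
  also have "(((- (1 + 0) * exp (- l * x) + exp (- l * x) * (0 * x + 1 * - l) * - (x + 1 / l)) * l
       - - (x + 1 / l) * exp (- l * x) * 0) / (l * l)) = x * exp (- l * x)"
    using assms by (simp add: field_simps)
  finally show ?thesis .
qed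

lemma xexp_antiderivative_bounds:
  fixes l x :: real
  assumes "0 < l" "0 \<le> x"
  shows "- 1 / l^2 \<le> - (x + 1 / l) * exp (- l * x) / l"
    and "- (x + 1 / l) * exp (- l * x) / l \<le> 0"
proof -
  have "- (0 + 1 / l) * exp (- l * 0) / l \<le> - (x + 1 / l) * exp (- l * x) / l"
  proof (rule DERIV_nonneg_imp_nondecreasing[OF assms(2)])
    fix y :: real assume "0 \<le> y"
    then show "\<exists>d. ((\<lambda>x. - (x + 1 / l) * exp (- l * x) / l) has_real_derivative d) (at y) \<and> 0 \<le> d"
      using xexp_antiderivative[of l y] assms(1) by auto
  qed
  then show "- 1 / l^2 \<le> - (x + 1 / l) * exp (- l * x) / l" by (simp add: power2_eq_square)
  have "0 \<le> x + 1 / l" using assms by simp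
  then have "- (x + 1 / l) * exp (- l * x) \<le> 0" by (intro mult_nonpos_nonneg) auto
  then show "- (x + 1 / l) * exp (- l * x) / l \<le> 0" using assms by (intro divide_nonpos_pos) auto
qed

text \<open>A lower Riemann sum: on \<open>[a, b] \<subseteq> [a, (1 + \<epsilon>) a]\<close> the integrand \<open>x exp (- l x)\<close> with
  \<open>l = m / (1 + \<epsilon>)\<close> is at least \<open>a exp (- m a)\<close>.\<close>

lemma xexp_increment_le_integral:
  fixes l m \<epsilon> a b :: real
  assumes l: "l = m / (1 + \<epsilon>)" and "0 < m" "0 \<le> \<epsilon>"
    and ab: "0 \<le> a" "a \<le> b" "b \<le> (1 + \<epsilon>) * a"
  shows "(b - a) * (a * exp (- m * a))
    \<le> (- (b + 1 / l) * exp (- l * b) / l) - (- (a + 1 / l) * exp (- l * a) / l)"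
proof -
  have "0 < l" using assms by simp
  define c where "c = a * exp (- m * a)"
  define \<psi> where "\<psi> x = - (x + 1 / l) * exp (- l * x) / l - c * x" for x
  have "\<psi> a \<le> \<psi> b"
  proof (rule DERIV_nonneg_imp_nondecreasing[OF ab(2)])
    fix x assume x: "a \<le> x" "x \<le> b"
    have d: "(\<psi> has_real_derivative (x * exp (- l * x) - c)) (at x)"
      unfolding \<psi>_def using DERIV_diff[OF xexp_antiderivative DERIV_cmult_Id[of c x]] \<open>0 < l\<close>
      by simp
    have "c = a * exp (- l * ((1 + \<epsilon>) * a))" unfolding c_def l using assms by simp
    also have "\<dots> \<le> x * exp (- l * x)"
      using x ab \<open>0 < l\<close> by (intro mult_mono) auto
    finally show "\<exists>y. (\<psi> has_real_derivative y) (at x) \<and> 0 \<le> y" using d by auto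
  qed
  then show ?thesis unfolding \<psi>_def c_def by (simp add: algebra_simps)
qed

text \<open>Each summand is at most \<open>\<epsilon>\<close> times the integral of \<open>x exp (- l x)\<close> over
  \<open>[q r, q (r + 2)]\<close>; as every point is covered by at most two of these intervals, the sum is
  at most \<open>2 \<epsilon> / l\<^sup>2\<close>.\<close>

lemma sum_sq_increments_exp_le:
  fixes q :: "nat \<Rightarrow> real" and \<epsilon> m :: real
  assumes mono: "mono q" and q0: "0 \<le> q 0"
    and step: "\<And>r. r < R \<Longrightarrow> q (r + 2) \<le> (1 + \<epsilon>) * q r"
    and e: "0 \<le> \<epsilon>" and m: "0 < m"
  shows "(\<Sum>r<R. (q (r + 2) - q r)^2 * exp (- m * q r)) \<le> 2 * \<epsilon> * ((1 + \<epsilon>) / m)^2"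
proof -
  define l where "l = m / (1 + \<epsilon>)"
  have l: "0 < l" using m e by (simp add: l_def)
  define F where "F x = - (x + 1 / l) * exp (- l * x) / l" for x
  have q_nonneg: "0 \<le> q i" for i using monoD[OF mono, of 0 i] q0 by simp
  have q_le: "q r \<le> q (r + 2)" for r using monoD[OF mono, of r "r + 2"] by simp
  have summand: "(q (r + 2) - q r)^2 * exp (- m * q r) \<le> \<epsilon> * (F (q (r + 2)) - F (q r))"
    if "r < R" for r
  proof -
    have d0: "0 \<le> q (r + 2) - q r" using q_le[of r] by simp
    have d1: "q (r + 2) - q r \<le> \<epsilon> * q r" using step[OF that] by (simp add: algebra_simps)
    have "(q (r + 2) - q r)^2 * exp (- m * q r)
        = (q (r + 2) - q r) * ((q (r + 2) - q r) * exp (- m * q r))"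
      by (simp add: power2_eq_square)
    also have "\<dots> \<le> (q (r + 2) - q r) * ((\<epsilon> * q r) * exp (- m * q r))"
      using d0 d1 by (intro mult_left_mono mult_right_mono) auto
    also have "\<dots> = \<epsilon> * ((q (r + 2) - q r) * (q r * exp (- m * q r)))" by (simp add: algebra_simps)
    also have "\<dots> \<le> \<epsilon> * (F (q (r + 2)) - F (q r))"
      unfolding F_def using e
      by (intro mult_left_mono xexp_increment_le_integral[OF l_def m e])
        (use q_nonneg q_le step[OF that] in auto)
    finally show ?thesis .
  qed
  have "(\<Sum>r<R. (q (r + 2) - q r)^2 * exp (- m * q r)) \<le> (\<Sum>r<R. \<epsilon> * (F (q (r + 2)) - F (q r)))"
    by (intro sum_mono summand) auto
  also have "\<dots> = \<epsilon> * ((\<Sum>r<R. F (q (Suc r + 1)) - F (q (r + 1))) + (\<Sum>r<R. F (q (Suc r)) - F (q r)))"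
  proof -
    have split: "(\<Sum>r<R. F (q (r + 2)) - F (q r))
        = (\<Sum>r<R. (F (q (Suc r + 1)) - F (q (r + 1))) + (F (q (Suc r)) - F (q r)))"
      by (intro sum.cong) (auto simp: numeral_2_eq_2)
    show ?thesis unfolding sum_distrib_left[symmetric] split sum.distrib by (rule refl)
  qed
  also have "\<dots> = \<epsilon> * ((F (q (R + 1)) - F (q 1)) + (F (q R) - F (q 0)))"
    using sum_lessThan_telescope[of "\<lambda>r. F (q (r + 1))" R] sum_lessThan_telescope[of "\<lambda>r. F (q r)" R]
    by (simp only: One_nat_def add_0)
  also have "\<dots> \<le> \<epsilon> * (2 / l^2)"
  proof (intro mult_left_mono e)
    have lo: "- (1 / l^2) \<le> F x" and up: "F x \<le> 0" if "0 \<le> x" for x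
      unfolding F_def using xexp_antiderivative_bounds[OF l that] by simp_all
    show "F (q (R + 1)) - F (q 1) + (F (q R) - F (q 0)) \<le> 2 / l^2"
      using lo[OF q_nonneg[of 1]] lo[OF q_nonneg[of 0]] up[OF q_nonneg[of "R + 1"]]
        up[OF q_nonneg[of R]] by linarith
  qed
  also have "\<dots> = 2 * \<epsilon> * ((1 + \<epsilon>) / m)^2"
    unfolding l_def using e m by (simp add: field_simps power2_eq_square)
  finally show ?thesis .
qed

lemma sum_sq_increments_pow_le:
  fixes q :: "nat \<Rightarrow> real" and \<epsilon> :: real
  assumes "mono q" "0 \<le> q 0" "\<And>r. q r \<le> 1"
    and "\<And>r. r < R \<Longrightarrow> q (r + 2) \<le> (1 + \<epsilon>) * q r" "0 \<le> \<epsilon>" "3 \<le> n"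
  shows "(\<Sum>r<R. (q (r + 2) - q r)^2 * (1 - q r)^(n - 2)) \<le> 2 * \<epsilon> * ((1 + \<epsilon>) / (real n - 2))^2"
proof -
  have "(1 - q r)^(n - 2) \<le> exp (- (real n - 2) * q r)" for r
  proof -
    have "0 \<le> q r" using monoD[OF \<open>mono q\<close>, of 0 r] \<open>0 \<le> q 0\<close> by simp
    then have "(1 - q r)^(n - 2) \<le> exp (- q r)^(n - 2)"
      using assms(3)[of r] exp_ge_add_one_self[of "- q r"] by (intro power_mono) auto
    also have "\<dots> = exp (- (real n - 2) * q r)"
      using \<open>3 \<le> n\<close> by (simp add: exp_of_nat_mult[symmetric] of_nat_diff algebra_simps)
    finally show ?thesis .
  qed
  then have "(\<Sum>r<R. (q (r + 2) - q r)^2 * (1 - q r)^(n - 2))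
      \<le> (\<Sum>r<R. (q (r + 2) - q r)^2 * exp (- (real n - 2) * q r))"
    by (intro sum_mono mult_left_mono) auto
  also have "\<dots> \<le> 2 * \<epsilon> * ((1 + \<epsilon>) / (real n - 2))^2"
    using assms by (intro sum_sq_increments_exp_le) auto
  finally show ?thesis .
qed

section \<open>Spacings above the sample minimum\<close>

definition exp_spacing_sum :: "real \<Rightarrow> nat \<Rightarrow> (nat \<Rightarrow> real) \<Rightarrow> real" where
  "exp_spacing_sum c n x = (\<Sum>i<n. exp (- c * (x i - Min (x ` {..<n})))) - 1"

lemma order_stat_1_eq_Min:
  assumes "1 \<le> n"
  shows "order_stat x n 1 = Min (x ` {..<n})"
proof -
  define xs where "xs = sort (map x [0..<n])"
  have "length xs = n" by (simp add: xs_def)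
  then obtain a ys where xs: "xs = a # ys"
    using assms by (cases xs) auto
  have "sorted xs" by (simp add: xs_def)
  then have "Min (set xs) = a" by (intro Min_eqI) (auto simp: xs)
  moreover have "set xs = x ` {..<n}" by (auto simp: xs_def)
  ultimately show ?thesis unfolding order_stat_def xs_def[symmetric] xs by simp
qed

lemma T_stat_eq_exp_spacing_sum:
  assumes "1 \<le> n"
  shows "T_stat \<sigma> n d x = exp_spacing_sum (\<sigma> * sqrt (real d)) n x"
proof -
  define xs where "xs = sort (map x [0..<n])"
  have "length xs = n" by (simp add: xs_def)
  then obtain a ys where xs: "xs = a # ys"
    using assms by (cases xs) auto
  have len: "length ys = n - 1" using arg_cong[OF xs, of length] by (simp add: xs_def)
  have min: "order_stat x n 1 = a" "Min (x ` {..<n}) = a"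
    using order_stat_1_eq_Min[OF assms, of x] unfolding order_stat_def xs_def[symmetric] xs by simp_all
  define f where "f v = exp (- (\<sigma> * sqrt (real d)) * (v - a))" for v
  have "T_stat \<sigma> n d x = (\<Sum>l = 2..n. f (xs ! (l - 1)))"
    unfolding T_stat_def min unfolding order_stat_def xs_def[symmetric] f_def by simp
  also have "\<dots> = (\<Sum>j<n - 1. f (ys ! j))"
    by (rule sum.reindex_bij_witness[where i="\<lambda>j. j + 2" and j="\<lambda>l. l - 2"])
      (auto simp: xs numeral_2_eq_2)
  also have "\<dots> = sum_list (map f ys)"
    using len by (simp add: sum_list_sum_nth atLeast0LessThan)
  also have "\<dots> = sum_list (map f xs) - 1" by (simp add: xs f_def)
  also have "sum_list (map f xs) = sum_list (map f (map x [0..<n]))"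
    unfolding xs_def by (metis mset_map mset_sort sum_mset_sum_list)
  also have "\<dots> = (\<Sum>i<n. f (x i))"
    by (simp add: sum_set_upt_conv_sum_list_nat[symmetric] atLeast0LessThan comp_def)
  finally show ?thesis unfolding exp_spacing_sum_def f_def min by simp
qed

lemma exp_spacing_sum_le_card:
  fixes x :: "nat \<Rightarrow> real"
  assumes "1 \<le> n" "0 \<le> c" "Min (x ` {..<n}) \<le> t"
  shows "exp_spacing_sum c n x \<le> real (card {i\<in>{..<n}. x i \<le> t + h}) - 1 + n * exp (- c * h)"
proof -
  define m where "m = Min (x ` {..<n})"
  define J where "J = {i\<in>{..<n}. x i \<le> t + h}"
  have m_le: "m \<le> x i" if "i < n" for i unfolding m_def using that by (intro Min_le) auto
  have "(\<Sum>i<n. exp (- c * (x i - m)))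
      = (\<Sum>i\<in>J. exp (- c * (x i - m))) + (\<Sum>i\<in>{..<n} - J. exp (- c * (x i - m)))"
    using sum.subset_diff[of J "{..<n}"] by (auto simp: J_def add.commute)
  also have "\<dots> \<le> (\<Sum>i\<in>J. 1) + (\<Sum>i\<in>{..<n} - J. exp (- c * h))"
  proof (intro add_mono sum_mono)
    show "exp (- c * (x i - m)) \<le> 1" if "i \<in> J" for i
      using m_le[of i] that \<open>0 \<le> c\<close> by (simp add: J_def mult_nonneg_nonneg)
    show "exp (- c * (x i - m)) \<le> exp (- c * h)" if "i \<in> {..<n} - J" for i
      using that assms(3) \<open>0 \<le> c\<close> unfolding J_def m_def by (auto intro!: mult_left_mono)
  qed
  also have "\<dots> = real (card J) + real (card ({..<n} - J)) * exp (- c * h)" by simp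
  also have "\<dots> \<le> real (card J) + real n * exp (- c * h)"
    using card_mono[of "{..<n}" "{..<n} - J"] by (intro add_left_mono mult_right_mono) auto
  finally show ?thesis unfolding exp_spacing_sum_def m_def J_def by simp
qed

lemma exp_spacing_sum_le:
  assumes "0 \<le> c"
  shows "exp_spacing_sum c n x \<le> real n - 1"
proof -
  have "exp (- c * (x i - Min (x ` {..<n}))) \<le> 1" if "i < n" for i
    using Min_le[of "x ` {..<n}" "x i"] that assms by (simp add: mult_nonneg_nonneg)
  then have "(\<Sum>i<n. exp (- c * (x i - Min (x ` {..<n})))) \<le> (\<Sum>i<n. 1)"
    by (intro sum_mono) auto
  then show ?thesis unfolding exp_spacing_sum_def by simp
qed

lemma sum_of_bool_distinct_pairs:
  fixes n :: nat
  assumes "J \<subseteq> {..<n}"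
  shows "(\<Sum>i<n. \<Sum>j<n. of_bool (i \<noteq> j \<and> i \<in> J \<and> j \<in> J) :: real)
    = real (card J) * (real (card J) - 1)"
proof -
  have fin: "finite J" using assms finite_subset by blast
  have inner: "(\<Sum>j<n. of_bool (i \<noteq> j \<and> i \<in> J \<and> j \<in> J) :: real)
      = (if i \<in> J then real (card J) - 1 else 0)" for i
  proof (cases "i \<in> J")
    case True
    have "(\<Sum>j<n. of_bool (i \<noteq> j \<and> i \<in> J \<and> j \<in> J) :: real) = (\<Sum>j\<in>J - {i}. 1)"
      using assms True by (intro sum.mono_neutral_cong_right) auto
    also have "\<dots> = real (card J) - 1"
      using True fin card_gt_0_iff[of J] by (auto simp: card_Diff_singleton of_nat_diff)
    finally show ?thesis using True by simp
  qed simp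
  have "(\<Sum>i<n. \<Sum>j<n. of_bool (i \<noteq> j \<and> i \<in> J \<and> j \<in> J) :: real)
      = (\<Sum>i\<in>J. real (card J) - 1)"
    unfolding inner using assms by (intro sum.mono_neutral_cong_right) auto
  then show ?thesis by simp
qed

lemma exists_grid_cell:
  fixes a0 h m :: real
  assumes "0 < h" "a0 < m" "m \<le> a0 + real R * h"
  obtains r where "r < R" "a0 + real r * h < m" "m \<le> a0 + real (r + 1) * h"
proof
  define t where "t = (m - a0) / h"
  have "0 < t" using assms by (simp add: t_def)
  have "t \<le> real R" using assms by (simp add: t_def divide_le_eq algebra_simps)
  have ceil_pos: "1 \<le> \<lceil>t\<rceil>" using \<open>0 < t\<close> by simp
  define r where "r = nat \<lceil>t\<rceil> - 1"
  have r: "real r = real_of_int \<lceil>t\<rceil> - 1"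
  proof -
    have "int r = \<lceil>t\<rceil> - 1" unfolding r_def using ceil_pos by linarith
    then show ?thesis by (metis of_int_diff of_int_of_nat_eq of_int_1)
  qed
  have "\<lceil>t\<rceil> \<le> int R" using \<open>t \<le> real R\<close> by (simp add: ceiling_le_iff)
  then show "r < R" using ceil_pos unfolding r_def by linarith
  have "real r < t" using r ceiling_correct[of t] by linarith
  then show "a0 + real r * h < m" using assms unfolding t_def by (simp add: field_simps)
  have "t \<le> real r + 1" using r le_of_int_ceiling[of t] by linarith
  then show "m \<le> a0 + real (r + 1) * h" using assms unfolding t_def by (simp add: field_simps)
qed

definition window_pair :: "(nat \<Rightarrow> real) \<Rightarrow> nat \<Rightarrow> real \<Rightarrow> real \<Rightarrow> nat \<Rightarrow> nat \<Rightarrow> bool" where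
  "window_pair x n a b i j \<longleftrightarrow> i \<noteq> j \<and> (\<forall>k<n. a < x k) \<and> x i \<le> b \<and> x j \<le> b"

lemma card_le_window_pair_count:
  fixes x :: "nat \<Rightarrow> real"
  assumes "\<forall>k<n. a < x k" "i0 < n" "x i0 \<le> b"
  shows "real (card {i\<in>{..<n}. x i \<le> b}) - 1
    \<le> (\<Sum>i<n. \<Sum>j<n. of_bool (window_pair x n a b i j))"
proof -
  define J where "J = {i\<in>{..<n}. x i \<le> b}"
  have "i0 \<in> J" "finite J" using assms by (simp_all add: J_def)
  then have "0 < card J" using card_gt_0_iff by blast
  then have "1 * (real (card J) - 1) \<le> real (card J) * (real (card J) - 1)"
    by (intro mult_right_mono) auto
  also have "\<dots> = (\<Sum>i<n. \<Sum>j<n. of_bool (i \<noteq> j \<and> i \<in> J \<and> j \<in> J))"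
    by (rule sum_of_bool_distinct_pairs[symmetric]) (auto simp: J_def)
  also have "\<dots> = (\<Sum>i<n. \<Sum>j<n. of_bool (window_pair x n a b i j))"
    using assms(1) by (intro sum.cong refl) (auto simp: window_pair_def J_def)
  finally show ?thesis unfolding J_def by simp
qed

lemma exp_spacing_sum_le_window_pairs:
  fixes x :: "nat \<Rightarrow> real" and a0 :: real
  assumes "1 \<le> n" "0 \<le> c" "0 < h"
  defines "a \<equiv> \<lambda>r::nat. a0 + real r * h"
  shows "exp_spacing_sum c n x \<le> n * exp (- c * h)
     + (\<Sum>r<R. \<Sum>i<n. \<Sum>j<n. of_bool (window_pair x n (a r) (a (r + 2)) i j))
     + n * of_bool (\<exists>i<n. x i \<le> a0) + n * of_bool (\<forall>i<n. a R < x i)"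
    (is "_ \<le> ?E + (\<Sum>r<R. ?P r) + ?T1 + ?T2")
proof -
  define m where "m = Min (x ` {..<n})"
  have "m \<in> x ` {..<n}" unfolding m_def using assms(1) by (intro Min_in) (auto simp: lessThan_empty_iff)
  then obtain i0 where i0: "i0 < n" "x i0 = m" by auto
  have m_le: "m \<le> x i" if "i < n" for i unfolding m_def using that by (intro Min_le) auto
  have P_nonneg: "0 \<le> ?P r" for r by (intro sum_nonneg) (simp add: of_bool_def)
  have T_nonneg: "0 \<le> ?T1" "0 \<le> ?T2" by (simp_all add: of_bool_def)
  show ?thesis
  proof (cases "(\<exists>i<n. x i \<le> a0) \<or> (\<forall>i<n. a R < x i)")
    case True
    then have "real n - 1 \<le> ?T1 + ?T2" by (auto simp: of_bool_def)
    moreover have "0 \<le> (\<Sum>r<R. ?P r)" using P_nonneg by (simp add: sum_nonneg)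
    moreover have "0 \<le> ?E" by simp
    ultimately show ?thesis using exp_spacing_sum_le[OF \<open>0 \<le> c\<close>, of n x] by linarith
  next
    case False
    then obtain k where "k < n" "x k \<le> a R" "\<forall>i<n. a0 < x i" by (meson not_less)
    then have "a0 < m" "m \<le> a R" using i0 m_le[of k] by auto
    then obtain r where r: "r < R" "a r < m" "m \<le> a (r + 1)"
      using exists_grid_cell[OF \<open>0 < h\<close>] unfolding a_def by blast
    have a_step: "a (r + 1) + h = a (r + 2)" by (simp add: a_def algebra_simps)
    have "exp_spacing_sum c n x \<le> real (card {i\<in>{..<n}. x i \<le> a (r + 2)}) - 1 + n * exp (- c * h)"
      using exp_spacing_sum_le_card[OF assms(1,2), of x "a (r + 1)" h] r(3)
      unfolding m_def a_step by simp
    also have "real (card {i\<in>{..<n}. x i \<le> a (r + 2)}) - 1 \<le> ?P r"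
      using i0 r(2,3) m_le \<open>0 < h\<close> a_step
      by (intro card_le_window_pair_count[of n "a r" x i0]) (auto intro: less_le_trans)
    also have "?P r \<le> (\<Sum>r<R. ?P r)" using r(1) P_nonneg by (intro member_le_sum) auto
    finally show ?thesis using T_nonneg by linarith
  qed
qed

section \<open>Independent samples with a common distribution function\<close>

lemma (in prob_space) integrable_of_bool:
  "{\<omega> \<in> space M. P \<omega>} \<in> events \<Longrightarrow> integrable M (\<lambda>\<omega>. of_bool (P \<omega>) :: real)"
  by (subst Bochner_Integration.integrable_cong[OF refl, of _ _ "indicator {\<omega> \<in> space M. P \<omega>}"])
    (auto simp: indicator_def integrable_indicator_iff emeasure_eq_measure)

lemma (in prob_space) expectation_of_bool:
  "{\<omega> \<in> space M. P \<omega>} \<in> events \<Longrightarrow> expectation (\<lambda>\<omega>. of_bool (P \<omega>) :: real) = prob {\<omega> \<in> space M. P \<omega>}"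
  by (subst Bochner_Integration.integral_cong[OF refl, of _ _ "indicator {\<omega> \<in> space M. P \<omega>}"])
    (auto simp: indicator_def emeasure_eq_measure)

locale iid_sample = prob_space M for M :: "'a measure" +
  fixes X :: "nat \<Rightarrow> 'a \<Rightarrow> real" and n :: nat and G :: "real \<Rightarrow> real"
  assumes sample_nonempty: "0 < n"
    and X_measurable: "\<And>i. i < n \<Longrightarrow> X i \<in> borel_measurable M"
    and X_indep: "indep_vars (\<lambda>_. borel) X {..<n}"
    and cdf_X: "\<And>i. i < n \<Longrightarrow> cdf (distr M borel (X i)) = G"
begin

lemma vimage_X_in_events: "i < n \<Longrightarrow> B \<in> sets borel \<Longrightarrow> X i -` B \<inter> space M \<in> events"
  using X_measurable by (simp add: measurable_sets)

lemma INT_vimage_X_in_events: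
  "(\<And>k. k < n \<Longrightarrow> B k \<in> sets borel) \<Longrightarrow> (\<Inter>k<n. X k -` B k \<inter> space M) \<in> events"
  using sample_nonempty vimage_X_in_events by (intro sets.finite_INT) auto

lemma UN_vimage_X_in_events:
  "(\<And>k. k < n \<Longrightarrow> B k \<in> sets borel) \<Longrightarrow> (\<Union>k<n. X k -` B k \<inter> space M) \<in> events"
  using vimage_X_in_events by (intro sets.finite_UN) auto

lemma prob_X_le:
  assumes "i < n"
  shows "prob (X i -` {..s} \<inter> space M) = G s"
proof -
  have "G s = measure (distr M borel (X i)) {..s}" using fun_cong[OF cdf_X[OF assms], of s] by (simp add: cdf_def)
  also have "\<dots> = prob (X i -` {..s} \<inter> space M)" by (rule measure_distr[OF X_measurable[OF assms]]) simp
  finally show ?thesis by simp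
qed

lemma real_distribution_distr_X0: "real_distribution (distr M borel (X 0))"
  using real_distribution_distr X_measurable sample_nonempty by auto

lemma G_mono: "x \<le> y \<Longrightarrow> G x \<le> G y"
  and G_nonneg: "0 \<le> G x"
  and G_le_1: "G x \<le> 1"
proof -
  interpret X0: real_distribution "distr M borel (X 0)" by (rule real_distribution_distr_X0)
  have G: "G = cdf (distr M borel (X 0))" using cdf_X[OF sample_nonempty] by simp
  show "x \<le> y \<Longrightarrow> G x \<le> G y" unfolding G by (rule X0.cdf_nondecreasing)
  show "0 \<le> G x" unfolding G by (rule X0.cdf_nonneg)
  show "G x \<le> 1" unfolding G by (rule X0.cdf_bounded_prob)
qed

lemma prob_X_Ioc: "i < n \<Longrightarrow> a \<le> b \<Longrightarrow> prob (X i -` {a<..b} \<inter> space M) = G b - G a"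
proof -
  assume "i < n" "a \<le> b"
  have "X i -` {a<..b} \<inter> space M = (X i -` {..b} \<inter> space M) - (X i -` {..a} \<inter> space M)" by auto
  moreover have "prob ((X i -` {..b} \<inter> space M) - (X i -` {..a} \<inter> space M))
      = prob (X i -` {..b} \<inter> space M) - prob (X i -` {..a} \<inter> space M)"
    using \<open>i < n\<close> \<open>a \<le> b\<close> by (intro finite_measure_Diff vimage_X_in_events) auto
  ultimately show ?thesis using \<open>i < n\<close> by (simp add: prob_X_le)
qed

lemma prob_X_Ioi: "i < n \<Longrightarrow> prob (X i -` {a<..} \<inter> space M) = 1 - G a"
proof -
  assume "i < n"
  have "X i -` {a<..} \<inter> space M = space M - (X i -` {..a} \<inter> space M)" by auto
  then show ?thesis using prob_compl[OF vimage_X_in_events] \<open>i < n\<close> by (simp add: prob_X_le)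
qed

lemma prob_INT_vimage_X:
  "(\<And>k. k < n \<Longrightarrow> B k \<in> sets borel)
    \<Longrightarrow> prob (\<Inter>k<n. X k -` B k \<inter> space M) = (\<Prod>k<n. prob (X k -` B k \<inter> space M))"
  using sample_nonempty by (intro indep_varsD_finite[OF X_indep]) auto

lemma all_X_gt_event_eq:
  "{\<omega> \<in> space M. \<forall>k<n. a < X k \<omega>} = (\<Inter>k<n. X k -` {a<..} \<inter> space M)"
proof (rule set_eqI)
  fix \<omega>
  show "\<omega> \<in> {\<omega> \<in> space M. \<forall>k<n. a < X k \<omega>} \<longleftrightarrow> \<omega> \<in> (\<Inter>k<n. X k -` {a<..} \<inter> space M)"
  proof (cases "\<omega> \<in> space M")
    case False
    then show ?thesis using sample_nonempty by blast
  qed auto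
qed

lemma all_X_gt_in_events: "{\<omega> \<in> space M. \<forall>k<n. a < X k \<omega>} \<in> events"
  unfolding all_X_gt_event_eq by (rule INT_vimage_X_in_events) simp

lemma prob_all_X_gt: "prob {\<omega> \<in> space M. \<forall>k<n. a < X k \<omega>} = (1 - G a) ^ n"
proof -
  have "prob {\<omega> \<in> space M. \<forall>k<n. a < X k \<omega>} = (\<Prod>k<n. prob (X k -` {a<..} \<inter> space M))"
    unfolding all_X_gt_event_eq by (rule prob_INT_vimage_X) simp
  also have "\<dots> = (\<Prod>k<n. 1 - G a)" by (intro prod.cong) (auto simp: prob_X_Ioi)
  finally show ?thesis by simp
qed

lemma some_X_le_event_eq:
  "{\<omega> \<in> space M. \<exists>k<n. X k \<omega> \<le> a} = (\<Union>k<n. X k -` {..a} \<inter> space M)"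
  by auto

lemma some_X_le_in_events: "{\<omega> \<in> space M. \<exists>k<n. X k \<omega> \<le> a} \<in> events"
  unfolding some_X_le_event_eq by (rule UN_vimage_X_in_events) simp

lemma prob_some_X_le: "prob {\<omega> \<in> space M. \<exists>k<n. X k \<omega> \<le> a} \<le> n * G a"
proof -
  have "prob {\<omega> \<in> space M. \<exists>k<n. X k \<omega> \<le> a} \<le> (\<Sum>i<n. prob (X i -` {..a} \<inter> space M))"
    unfolding some_X_le_event_eq
    by (intro finite_measure_subadditive_finite) (auto intro: vimage_X_in_events)
  then show ?thesis by (simp add: prob_X_le)
qed

lemma window_pair_event_eq:
  assumes "i < n" "j < n" "i \<noteq> j"
  shows "{\<omega> \<in> space M. window_pair (\<lambda>k. X k \<omega>) n a b i j}
    = (\<Inter>k<n. X k -` (if k = i \<or> k = j then {a<..b} else {a<..}) \<inter> space M)"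
    (is "_ = (\<Inter>k<n. X k -` ?B k \<inter> space M)")
proof (rule set_eqI)
  fix \<omega>
  show "\<omega> \<in> {\<omega> \<in> space M. window_pair (\<lambda>k. X k \<omega>) n a b i j}
      \<longleftrightarrow> \<omega> \<in> (\<Inter>k<n. X k -` ?B k \<inter> space M)"
  proof (cases "\<omega> \<in> space M")
    case True
    have "window_pair (\<lambda>k. X k \<omega>) n a b i j \<longleftrightarrow> (\<forall>k<n. X k \<omega> \<in> ?B k)"
    proof
      assume H: "\<forall>k<n. X k \<omega> \<in> ?B k"
      have "a < X k \<omega>" if "k < n" for k using H that by (cases "k = i \<or> k = j") auto
      then show "window_pair (\<lambda>k. X k \<omega>) n a b i j"
        using H assms unfolding window_pair_def by auto
    qed (auto simp: window_pair_def)
    moreover have "\<omega> \<in> (\<Inter>k<n. X k -` ?B k \<inter> space M) \<longleftrightarrow> (\<forall>k<n. X k \<omega> \<in> ?B k)"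
      using True by blast
    ultimately show ?thesis using True by simp
  next
    case False
    then show ?thesis using sample_nonempty by blast
  qed
qed

lemma window_pair_event_in_events:
  assumes "i < n" "j < n"
  shows "{\<omega> \<in> space M. window_pair (\<lambda>k. X k \<omega>) n a b i j} \<in> events"
proof (cases "i = j")
  case False
  show ?thesis unfolding window_pair_event_eq[OF assms False] by (rule INT_vimage_X_in_events) simp
qed (simp add: window_pair_def)

lemma prob_window_pair:
  assumes "i < n" "j < n" "a \<le> b"
  shows "prob {\<omega> \<in> space M. window_pair (\<lambda>k. X k \<omega>) n a b i j}
    = of_bool (i \<noteq> j) * ((G b - G a)^2 * (1 - G a)^(n - 2))"
proof (cases "i = j")
  case False
  define B where "B k = (if k = i \<or> k = j then {a<..b} else {a<..})" for k
  have "prob {\<omega> \<in> space M. window_pair (\<lambda>k. X k \<omega>) n a b i j}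
      = (\<Prod>k<n. prob (X k -` B k \<inter> space M))"
    unfolding window_pair_event_eq[OF assms(1,2) False] B_def[symmetric]
    by (rule prob_INT_vimage_X) (simp add: B_def)
  also have "\<dots> = (\<Prod>k<n. if k = i \<or> k = j then G b - G a else 1 - G a)"
    using assms by (intro prod.cong) (auto simp: B_def prob_X_Ioc prob_X_Ioi)
  also have "\<dots> = (\<Prod>k\<in>{..<n} \<inter> {k. k = i \<or> k = j}. G b - G a)
      * (\<Prod>k\<in>{..<n} \<inter> - {k. k = i \<or> k = j}. 1 - G a)"
    by (rule prod.If_cases) simp
  also have "{..<n} \<inter> {k. k = i \<or> k = j} = {i, j}" using assms by auto
  also have "{..<n} \<inter> - {k. k = i \<or> k = j} = {..<n} - {i, j}" by auto
  finally show ?thesis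
    using assms False by (simp add: card_Diff_subset power2_eq_square numeral_2_eq_2)
qed (simp add: window_pair_def)

lemma Min_X_measurable: "(\<lambda>\<omega>. Min ((\<lambda>i. X i \<omega>) ` {..<n})) \<in> borel_measurable M"
  by (rule borel_measurable_Min) (auto intro: X_measurable)

lemma exp_spacing_sum_X_measurable:
  "(\<lambda>\<omega>. exp_spacing_sum c n (\<lambda>i. X i \<omega>)) \<in> borel_measurable M"
proof -
  have "(\<lambda>\<omega>. exp (- c * (X i \<omega> - Min ((\<lambda>i. X i \<omega>) ` {..<n})))) \<in> borel_measurable M"
    if "i < n" for i
    using X_measurable[OF that] Min_X_measurable by measurable
  then show ?thesis unfolding exp_spacing_sum_def by (intro borel_measurable_diff borel_measurable_sum) auto
qed

lemma integrable_exp_spacing_sum_X: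
  assumes "0 \<le> c"
  shows "integrable M (\<lambda>\<omega>. exp_spacing_sum c n (\<lambda>i. X i \<omega>))"
proof (rule integrable_const_bound[where B="real n"])
  show "AE \<omega> in M. norm (exp_spacing_sum c n (\<lambda>i. X i \<omega>)) \<le> real n"
  proof (rule AE_I2)
    fix \<omega>
    have "-1 \<le> exp_spacing_sum c n (\<lambda>i. X i \<omega>)"
      unfolding exp_spacing_sum_def by (simp add: sum_nonneg)
    moreover have "exp_spacing_sum c n (\<lambda>i. X i \<omega>) \<le> real n - 1"
      by (rule exp_spacing_sum_le[OF assms])
    ultimately show "norm (exp_spacing_sum c n (\<lambda>i. X i \<omega>)) \<le> real n"
      using sample_nonempty by (simp add: abs_le_iff)
  qed
qed (rule exp_spacing_sum_X_measurable)

lemma integrable_window_pair_count: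
  "integrable M (\<lambda>\<omega>. \<Sum>i<n. \<Sum>j<n. of_bool (window_pair (\<lambda>k. X k \<omega>) n a b i j) :: real)"
  using window_pair_event_in_events
  by (intro Bochner_Integration.integrable_sum integrable_of_bool) auto

lemma expectation_window_pair_count:
  assumes "a \<le> b"
  shows "expectation (\<lambda>\<omega>. \<Sum>i<n. \<Sum>j<n. of_bool (window_pair (\<lambda>k. X k \<omega>) n a b i j) :: real)
    = real n * (real n - 1) * ((G b - G a)^2 * (1 - G a)^(n - 2))"
proof -
  have "expectation (\<lambda>\<omega>. \<Sum>i<n. \<Sum>j<n. of_bool (window_pair (\<lambda>k. X k \<omega>) n a b i j) :: real)
      = (\<Sum>i<n. expectation (\<lambda>\<omega>. \<Sum>j<n. of_bool (window_pair (\<lambda>k. X k \<omega>) n a b i j) :: real))"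
    by (intro Bochner_Integration.integral_sum Bochner_Integration.integrable_sum integrable_of_bool
        window_pair_event_in_events) auto
  also have "\<dots> = (\<Sum>i<n. \<Sum>j<n. expectation (\<lambda>\<omega>. of_bool (window_pair (\<lambda>k. X k \<omega>) n a b i j) :: real))"
    by (intro sum.cong refl Bochner_Integration.integral_sum integrable_of_bool
        window_pair_event_in_events) auto
  also have "\<dots> = (\<Sum>i<n. \<Sum>j<n. prob {\<omega> \<in> space M. window_pair (\<lambda>k. X k \<omega>) n a b i j})"
    by (intro sum.cong refl expectation_of_bool window_pair_event_in_events) auto
  also have "\<dots> = (\<Sum>i<n. \<Sum>j<n. of_bool (i \<noteq> j \<and> i \<in> {..<n} \<and> j \<in> {..<n})
      * ((G b - G a)^2 * (1 - G a)^(n - 2)))"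
    using assms by (intro sum.cong refl) (simp add: prob_window_pair)
  also have "\<dots> = real n * (real n - 1) * ((G b - G a)^2 * (1 - G a)^(n - 2))"
    unfolding sum_distrib_right[symmetric] sum_of_bool_distinct_pairs[OF subset_refl] by simp
  finally show ?thesis .
qed

lemma expectation_exp_spacing_sum_le_window_probs:
  fixes c h a0 :: real and R :: nat
  assumes "0 \<le> c" "0 < h"
  defines "a \<equiv> \<lambda>r::nat. a0 + real r * h"
  shows "expectation (\<lambda>\<omega>. exp_spacing_sum c n (\<lambda>i. X i \<omega>))
    \<le> n * exp (- c * h)
      + (\<Sum>r<R. real n * (real n - 1) * ((G (a (r + 2)) - G (a r))^2 * (1 - G (a r))^(n - 2)))
      + n * (n * G a0) + n * (1 - G (a R))^n"
proof -
  define C :: "nat \<Rightarrow> 'a \<Rightarrow> real" where "C r \<omega> = (\<Sum>i<n. \<Sum>j<n. of_bool (window_pair (\<lambda>k. X k \<omega>) n (a r) (a (r + 2)) i j))"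
    for r \<omega>
  define U where "U \<omega> = real n * exp (- c * h) + (\<Sum>r<R. C r \<omega>)
      + real n * of_bool (\<exists>i<n. X i \<omega> \<le> a0) + real n * of_bool (\<forall>i<n. a R < X i \<omega>)" for \<omega>
  have int_C: "integrable M (C r)" for r unfolding C_def by (rule integrable_window_pair_count)
  have int_E: "integrable M (\<lambda>\<omega>. of_bool (\<exists>i<n. X i \<omega> \<le> a0) :: real)"
    "integrable M (\<lambda>\<omega>. of_bool (\<forall>i<n. a R < X i \<omega>) :: real)"
    by (rule integrable_of_bool some_X_le_in_events all_X_gt_in_events)+
  have C_expectation: "expectation (C r)
      = real n * (real n - 1) * ((G (a (r + 2)) - G (a r))^2 * (1 - G (a r))^(n - 2))" for r
    unfolding C_def using \<open>0 < h\<close> by (intro expectation_window_pair_count) (simp add: a_def)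
  have "expectation (\<lambda>\<omega>. exp_spacing_sum c n (\<lambda>i. X i \<omega>)) \<le> expectation U"
  proof (rule integral_mono)
    show "integrable M U" unfolding U_def
      by (intro Bochner_Integration.integrable_add Bochner_Integration.integrable_sum
          integrable_mult_right int_C int_E) simp
    show "exp_spacing_sum c n (\<lambda>i. X i \<omega>) \<le> U \<omega>" for \<omega>
      using exp_spacing_sum_le_window_pairs[of n c h "\<lambda>i. X i \<omega>" a0 R] sample_nonempty assms(1,2)
      unfolding U_def C_def a_def by (simp only: Suc_le_eq)
  qed (simp add: integrable_exp_spacing_sum_X[OF \<open>0 \<le> c\<close>])
  also have "expectation U = n * exp (- c * h) + (\<Sum>r<R. expectation (C r))
      + n * prob {\<omega> \<in> space M. \<exists>i<n. X i \<omega> \<le> a0} + n * prob {\<omega> \<in> space M. \<forall>i<n. a R < X i \<omega>}"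
  proof -
    have "integrable M (\<lambda>\<omega>. \<Sum>r<R. C r \<omega>)" using int_C by auto
    then have "expectation U = n * exp (- c * h) + expectation (\<lambda>\<omega>. \<Sum>r<R. C r \<omega>)
        + n * expectation (\<lambda>\<omega>. of_bool (\<exists>i<n. X i \<omega> \<le> a0) :: real)
        + n * expectation (\<lambda>\<omega>. of_bool (\<forall>i<n. a R < X i \<omega>) :: real)"
      unfolding U_def using int_E by (simp add: prob_space)
    also have "expectation (\<lambda>\<omega>. \<Sum>r<R. C r \<omega>) = (\<Sum>r<R. expectation (C r))"
      using int_C by (rule Bochner_Integration.integral_sum)
    finally show ?thesis
      using expectation_of_bool[OF some_X_le_in_events] expectation_of_bool[OF all_X_gt_in_events]
      by simp
  qed
  also have "(\<Sum>r<R. expectation (C r))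
      = (\<Sum>r<R. real n * (real n - 1) * ((G (a (r + 2)) - G (a r))^2 * (1 - G (a r))^(n - 2)))"
    by (simp only: C_expectation)
  also have "prob {\<omega> \<in> space M. \<forall>i<n. a R < X i \<omega>} = (1 - G (a R))^n" by (rule prob_all_X_gt)
  also have "n * prob {\<omega> \<in> space M. \<exists>i<n. X i \<omega> \<le> a0} \<le> n * (n * G a0)"
    by (intro mult_left_mono prob_some_X_le) auto
  finally show ?thesis by simp
qed

end

section \<open>The expected spacing sum\<close>

text \<open>With \<open>h = 2 ln n / c\<close>, the four terms account for the points more than \<open>h\<close> above the minimum,
  the pairs of points in a window of width \<open>2 h\<close> of a grid on \<open>[-D, D]\<close>, and a minimum below
  \<open>-D\<close> or above \<open>0\<close>.\<close>

definition spacing_bound :: "real \<Rightarrow> real \<Rightarrow> real \<Rightarrow> real \<Rightarrow> nat \<Rightarrow> real" where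
  "spacing_bound c D al au n =
    (let \<epsilon> = cdf_ratio_slack (2 * ln (real n) / c) D al au
     in 1 / real n + real n * (real n - 1) * (2 * \<epsilon> * ((1 + \<epsilon>) / (real n - 2))^2)
        + (real n)^2 * ((1 + au) * exp (- D\<^sup>2 / 2)) + real n * (5/6)^n)"

lemma exists_grid_end:
  fixes D h :: real
  assumes "0 < h" "2 * h \<le> D"
  obtains R :: nat where "0 \<le> - D + real R * h" "- D + real (R + 1) * h \<le> D"
proof
  define R where "R = nat \<lceil>D / h\<rceil>"
  have "real R = of_int \<lceil>D / h\<rceil>" unfolding R_def using assms by simp
  then have R: "D / h \<le> real R" "real R < D / h + 1" by linarith+
  show "0 \<le> - D + real R * h" using R(1) assms(1) by (simp add: divide_le_eq mult.commute)
  have "real (R + 1) * h < (D / h + 2) * h"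
    using R(2) assms(1) by (intro mult_strict_right_mono) auto
  also have "\<dots> = D + 2 * h" using assms(1) by (simp add: field_simps)
  finally show "- D + real (R + 1) * h \<le> D" using assms(2) by simp
qed

lemma (in iid_sample) sum_window_probs_le:
  assumes "3 \<le> n" "0 < h" "-1/2 \<le> al" "-1/2 \<le> au" "- D + real (R + 1) * h \<le> D"
    and bounds: "\<And>s. - D \<le> s \<Longrightarrow> s \<le> D \<Longrightarrow> (1 + al) * \<Phi> s \<le> G s \<and> G s \<le> (1 + au) * \<Phi> s"
  defines "a \<equiv> \<lambda>r::nat. - D + real r * h" and "\<epsilon> \<equiv> cdf_ratio_slack h D al au"
  shows "(\<Sum>r<R. real n * (real n - 1) * ((G (a (r + 2)) - G (a r))^2 * (1 - G (a r))^(n - 2)))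
    \<le> real n * (real n - 1) * (2 * \<epsilon> * ((1 + \<epsilon>) / (real n - 2))^2)"
proof -
  have a_mono: "mono a" unfolding a_def using \<open>0 < h\<close> by (intro monoI) (simp add: mult_right_mono)
  have "G (a (r + 2)) \<le> (1 + \<epsilon>) * G (a r)" if "r < R" for r
  proof -
    have a2: "a (r + 2) = a r + 2 * h" unfolding a_def by (simp add: algebra_simps)
    have "a (r + 2) \<le> D" using assms(5) monoD[OF a_mono, of "r + 2" "R + 1"] that by (simp add: a_def)
    then have "G (a r + 2 * h) \<le> (1 + \<epsilon>) * G (a r)"
      unfolding \<epsilon>_def using assms(3,4) \<open>0 < h\<close> a2
      by (intro cdf_shift_le[OF bounds]) (auto simp: a_def G_nonneg)
    then show ?thesis unfolding a2 .
  qed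
  then have "(\<Sum>r<R. (G (a (r + 2)) - G (a r))^2 * (1 - G (a r))^(n - 2))
      \<le> 2 * \<epsilon> * ((1 + \<epsilon>) / (real n - 2))^2"
    using assms(1) by (intro sum_sq_increments_pow_le)
      (auto intro: monoI G_mono monoD[OF a_mono] simp: G_nonneg G_le_1 \<epsilon>_def cdf_ratio_slack_def)
  then show ?thesis using assms(1) by (simp add: sum_distrib_left[symmetric])
qed

lemma (in iid_sample) expectation_exp_spacing_sum_le:
  assumes "3 \<le> n" "0 < c" "1 \<le> D" "4 * ln (real n) / c \<le> D" "-1/2 \<le> al" "-1/2 \<le> au"
    and bounds: "\<And>s. - D \<le> s \<Longrightarrow> s \<le> D \<Longrightarrow> (1 + al) * \<Phi> s \<le> G s \<and> G s \<le> (1 + au) * \<Phi> s"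
  shows "expectation (\<lambda>\<omega>. exp_spacing_sum c n (\<lambda>i. X i \<omega>)) \<le> spacing_bound c D al au n"
proof -
  define h where "h = 2 * ln (real n) / c"
  have "0 < h" unfolding h_def using assms by simp
  moreover have "2 * h \<le> D" using assms(2,4) unfolding h_def by (simp add: field_simps)
  ultimately obtain R where R: "0 \<le> - D + real R * h" "- D + real (R + 1) * h \<le> D"
    by (rule exists_grid_end)
  define a where "a r = - D + real r * h" for r :: nat
  have "expectation (\<lambda>\<omega>. exp_spacing_sum c n (\<lambda>i. X i \<omega>))
    \<le> n * exp (- c * h)
      + (\<Sum>r<R. real n * (real n - 1) * ((G (a (r + 2)) - G (a r))^2 * (1 - G (a r))^(n - 2)))
      + n * (n * G (- D)) + n * (1 - G (a R))^n"
    using expectation_exp_spacing_sum_le_window_probs[of c h "- D" R] \<open>0 < c\<close> \<open>0 < h\<close>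
    unfolding a_def by simp
  moreover have "n * exp (- c * h) = 1 / n"
  proof -
    have "exp (- c * h) = exp (ln n) powr (- 2)" using assms(2) by (simp add: h_def powr_def)
    also have "\<dots> = 1 / (real n)^2"
      using assms(1) by (simp add: powr_minus powr_realpow inverse_eq_divide)
    finally show ?thesis by (simp add: power2_eq_square)
  qed
  moreover note sum_window_probs_le[OF assms(1) \<open>0 < h\<close> assms(5,6) R(2) bounds]
  moreover have "n * (n * G (- D)) \<le> (real n)^2 * ((1 + au) * exp (- D\<^sup>2 / 2))"
  proof -
    have "G (- D) \<le> (1 + au) * \<Phi> (- D)" using bounds[of "- D"] assms(3) by simp
    also have "\<dots> \<le> (1 + au) * exp (- D\<^sup>2 / 2)"
      using assms std_normal_cdf_tail_le by (intro mult_left_mono) auto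
    finally show ?thesis by (simp add: power2_eq_square mult.assoc mult_left_mono)
  qed
  moreover have "n * (1 - G (a R))^n \<le> n * (5/6)^n"
  proof -
    have "1/6 \<le> (1 + al) * \<Phi> (a R)"
      using std_normal_cdf_0_ge std_normal_cdf_mono[of 0 "a R"] R(1) assms(5)
        mult_mono[of "1/2" "1 + al" "1/3" "\<Phi> (a R)"] by (simp add: a_def)
    also have "\<dots> \<le> G (a R)"
    proof -
      have "a R \<le> D" using R(2) \<open>0 < h\<close> by (simp add: a_def algebra_simps)
      then show ?thesis using bounds[of "a R"] R(1) assms(3) by (simp add: a_def)
    qed
    finally show ?thesis using G_le_1[of "a R"] by (intro mult_left_mono power_mono) auto
  qed
  ultimately show ?thesis unfolding spacing_bound_def Let_def a_def h_def by linarith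
qed

lemma real_cond_exp_Markov_inequality:
  fixes g :: "'a \<Rightarrow> real"
  assumes "prob_space M" "subalgebra M F" "integrable M g" "\<And>\<omega>. \<omega> \<in> space M \<Longrightarrow> 0 \<le> g \<omega>"
    and "0 < \<epsilon>"
  shows "measure M {\<omega> \<in> space M. \<epsilon> < \<bar>real_cond_exp M F g \<omega>\<bar>} \<le> (\<integral>\<omega>. g \<omega> \<partial>M) / \<epsilon>"
proof -
  interpret prob_space M by (rule assms(1))
  interpret finite_measure_subalgebra M F by unfold_locales (rule assms(2))
  have C_nonneg: "AE \<omega> in M. 0 \<le> real_cond_exp M F g \<omega>"
    using assms(3,4) by (intro real_cond_exp_pos) (auto intro: borel_measurable_integrable)
  have C_int: "integrable M (real_cond_exp M F g)"
    and C_eq: "(\<integral>\<omega>. real_cond_exp M F g \<omega> \<partial>M) = (\<integral>\<omega>. g \<omega> \<partial>M)"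
    using real_cond_exp_int[OF assms(3)] by auto
  have "measure M {\<omega> \<in> space M. \<epsilon> < \<bar>real_cond_exp M F g \<omega>\<bar>}
      \<le> measure M {\<omega> \<in> space M. \<epsilon> \<le> real_cond_exp M F g \<omega>}"
  proof (rule finite_measure_mono_AE)
    show "AE \<omega> in M. \<omega> \<in> {\<omega> \<in> space M. \<epsilon> < \<bar>real_cond_exp M F g \<omega>\<bar>}
        \<longrightarrow> \<omega> \<in> {\<omega> \<in> space M. \<epsilon> \<le> real_cond_exp M F g \<omega>}"
      using C_nonneg by eventually_elim auto
    show "{\<omega> \<in> space M. \<epsilon> \<le> real_cond_exp M F g \<omega>} \<in> events"
      using borel_measurable_integrable[OF C_int] by measurable
  qed
  also have "\<dots> \<le> (\<integral>\<omega>. real_cond_exp M F g \<omega> \<partial>M) / \<epsilon>"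
    by (rule integral_Markov_inequality_measure[OF C_int sets.top C_nonneg \<open>0 < \<epsilon>\<close>])
  finally show ?thesis unfolding C_eq .
qed

lemma (in iid_sample) prob_cond_exp_T_stat_gt_le:
  assumes "3 \<le> n" "0 < \<sigma>" "0 < d" "0 < \<epsilon>"
    and "1 \<le> D" "4 * ln (real n) / (\<sigma> * sqrt (real d)) \<le> D" "-1/2 \<le> al" "-1/2 \<le> au"
    and bounds: "\<And>s. - D \<le> s \<Longrightarrow> s \<le> D \<Longrightarrow> (1 + al) * \<Phi> s \<le> G s \<and> G s \<le> (1 + au) * \<Phi> s"
  shows "measure M {\<omega> \<in> space M. \<epsilon> < \<bar>real_cond_exp M
      (vimage_algebra (space M) (\<lambda>\<omega>. order_stat (\<lambda>i. X i \<omega>) n 1) borel)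
      (\<lambda>\<omega>. T_stat \<sigma> n d (\<lambda>i. X i \<omega>)) \<omega>\<bar>}
    \<le> spacing_bound (\<sigma> * sqrt (real d)) D al au n / \<epsilon>"
proof -
  have n: "1 \<le> n" using sample_nonempty by simp
  have "(\<lambda>\<omega>. order_stat (\<lambda>i. X i \<omega>) n 1) \<in> borel_measurable M"
    unfolding order_stat_1_eq_Min[OF n] by (rule Min_X_measurable)
  then have "subalgebra M (vimage_algebra (space M) (\<lambda>\<omega>. order_stat (\<lambda>i. X i \<omega>) n 1) borel)"
    unfolding subalgebra_def using sets_image_in_sets[OF refl] by simp
  moreover have "integrable M (\<lambda>\<omega>. T_stat \<sigma> n d (\<lambda>i. X i \<omega>))"
    unfolding T_stat_eq_exp_spacing_sum[OF n] using assms(2)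
    by (intro integrable_exp_spacing_sum_X) simp
  moreover have "0 \<le> T_stat \<sigma> n d x" for x unfolding T_stat_def by (intro sum_nonneg) simp
  ultimately have "measure M {\<omega> \<in> space M. \<epsilon> < \<bar>real_cond_exp M
      (vimage_algebra (space M) (\<lambda>\<omega>. order_stat (\<lambda>i. X i \<omega>) n 1) borel)
      (\<lambda>\<omega>. T_stat \<sigma> n d (\<lambda>i. X i \<omega>)) \<omega>\<bar>}
    \<le> expectation (\<lambda>\<omega>. exp_spacing_sum (\<sigma> * sqrt (real d)) n (\<lambda>i. X i \<omega>)) / \<epsilon>"
    using real_cond_exp_Markov_inequality[OF prob_space_axioms _ _ _ assms(4)]
    unfolding T_stat_eq_exp_spacing_sum[OF n] by simp
  also have "\<dots> \<le> spacing_bound (\<sigma> * sqrt (real d)) D al au n / \<epsilon>"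
    using assms expectation_exp_spacing_sum_le[of "\<sigma> * sqrt (real d)" D al au]
    by (intro divide_right_mono) auto
  finally show ?thesis .
qed

section \<open>Asymptotics\<close>

lemma log_over_sqrt_times_powr_tendsto_0:
  fixes n d :: "nat \<Rightarrow> nat" and \<sigma> \<eta> :: real
  assumes sigma: "0 < \<sigma>" and eta: "\<eta> \<le> 1/6"
    and n_lim: "filterlim n at_top sequentially" and d_lim: "filterlim d at_top sequentially"
    and rate: "(\<lambda>k. ln (real (n k)) / real (d k) powr (2 * \<eta>)) \<longlonglongrightarrow> 0"
  shows "(\<lambda>k. (2 * ln (real (n k)) / (\<sigma> * sqrt (real (d k)))) * real (d k) powr \<eta>) \<longlonglongrightarrow> 0"
proof (rule tendsto_sandwich[where f="\<lambda>_. 0" and h="\<lambda>k. (2 / \<sigma>) * (ln (real (n k)) / real (d k) powr (2 * \<eta>))"])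
  have ev1: "eventually (\<lambda>k. 1 \<le> n k) sequentially"
    using n_lim unfolding filterlim_at_top by blast
  have ev2: "eventually (\<lambda>k. 1 \<le> d k) sequentially"
    using d_lim unfolding filterlim_at_top by blast
  have ev: "eventually (\<lambda>k. 1 \<le> n k \<and> 1 \<le> d k) sequentially"
    using ev1 ev2 by (intro eventually_conj)
  show "eventually (\<lambda>k. 0 \<le> (2 * ln (real (n k)) / (\<sigma> * sqrt (real (d k)))) * real (d k) powr \<eta>) sequentially"
    using ev by eventually_elim (use sigma in auto)
  show "eventually (\<lambda>k. (2 * ln (real (n k)) / (\<sigma> * sqrt (real (d k)))) * real (d k) powr \<eta>
      \<le> (2 / \<sigma>) * (ln (real (n k)) / real (d k) powr (2 * \<eta>))) sequentially"
    using ev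
  proof eventually_elim
    case (elim k)
    define x where "x = real (d k)"
    define L where "L = ln (real (n k))"
    have x1: "1 \<le> x" and L0: "0 \<le> L" using elim by (auto simp: x_def L_def)
    have sq: "sqrt x = x powr (1/2)" using x1 by (simp add: powr_half_sqrt)
    have f: "x powr \<eta> / sqrt x = x powr (\<eta> - 1/2)" using x1 by (simp add: sq powr_diff)
    have e0: "(2 * L / (\<sigma> * sqrt x)) * x powr \<eta> = (2/\<sigma>) * L * (x powr \<eta> / sqrt x)"
      by (simp add: divide_inverse mult_ac)
    have e1: "(2 * L / (\<sigma> * sqrt x)) * x powr \<eta> = (2 / \<sigma>) * L * x powr (\<eta> - 1/2)"
      unfolding e0 f ..
    \<comment> \<open>the only place where \<open>\<eta> \<le> 1/6\<close> is needed\<close>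
    have "x powr (\<eta> - 1/2) \<le> x powr (- (2 * \<eta>))" using x1 eta by (intro powr_mono) auto
    also have "x powr (- (2 * \<eta>)) = 1 / x powr (2 * \<eta>)" using x1 by (simp add: powr_minus divide_inverse)
    finally have "(2 / \<sigma>) * L * x powr (\<eta> - 1/2) \<le> (2 / \<sigma>) * L * (1 / x powr (2 * \<eta>))"
      using sigma L0 by (intro mult_left_mono) auto
    then have "(2 * L / (\<sigma> * sqrt x)) * x powr \<eta> \<le> (2 / \<sigma>) * (L / x powr (2 * \<eta>))"
      unfolding e1 by simp
    then show ?case unfolding x_def L_def by simp
  qed
  show "(\<lambda>_. 0) \<longlonglongrightarrow> (0::real)" by simp
  show "(\<lambda>k. (2 / \<sigma>) * (ln (real (n k)) / real (d k) powr (2 * \<eta>))) \<longlonglongrightarrow> 0"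
    using tendsto_mult[OF tendsto_const[of "2/\<sigma>"] rate] by simp
qed

lemma sq_times_exp_neg_half_le:
  fixes x u :: real
  assumes "0 < x" "0 < u" "ln x / u < 1/8"
  shows "x^2 * exp (- u / 2) \<le> exp (- u / 4)"
proof -
  have "2 * ln x \<le> u / 4" using assms(2,3) by (simp add: divide_less_eq)
  have "exp (2 * ln x) = exp (ln x) * exp (ln x)" unfolding mult_2 by (rule exp_add)
  then have "x^2 = exp (2 * ln x)" using assms(1) by (simp add: power2_eq_square)
  moreover have "exp (2 * ln x + - u / 2) = exp (2 * ln x) * exp (- u / 2)" by (rule exp_add)
  ultimately have "x^2 * exp (- u / 2) = exp (2 * ln x - u / 2)" by simp
  also have "\<dots> \<le> exp (- u / 4)" using \<open>2 * ln x \<le> u / 4\<close> by simp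
  finally show ?thesis .
qed

lemma sq_times_exp_neg_half_sq_powr_tendsto_0:
  fixes n d :: "nat \<Rightarrow> nat" and \<eta> :: real
  assumes "0 < \<eta>"
    and n_lim: "filterlim n at_top sequentially" and d_lim: "filterlim d at_top sequentially"
    and rate: "(\<lambda>k. ln (real (n k)) / real (d k) powr (2 * \<eta>)) \<longlonglongrightarrow> 0"
  shows "(\<lambda>k. (real (n k))^2 * exp (- (real (d k) powr \<eta>)\<^sup>2 / 2)) \<longlonglongrightarrow> 0"
proof -
  define u where "u k = real (d k) powr (2 * \<eta>)" for k
  have d_real: "filterlim (\<lambda>k. real (d k)) at_top sequentially"
    by (rule filterlim_compose[OF filterlim_real_sequentially d_lim])
  have u_lim: "filterlim u at_top sequentially"
    unfolding u_def by (rule filterlim_compose[OF real_powr_at_top d_real]) (use assms(1) in simp)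
  have u_eq: "(real (d k) powr \<eta>)\<^sup>2 = u k" for k
    unfolding u_def by (simp add: power2_eq_square powr_add[symmetric])
  have "\<forall>\<^sub>F k in sequentially. 1 \<le> n k" using n_lim unfolding filterlim_at_top by blast
  moreover have "\<forall>\<^sub>F k in sequentially. 0 < u k" using u_lim unfolding filterlim_at_top_dense by blast
  moreover have "\<forall>\<^sub>F k in sequentially. ln (real (n k)) / u k < 1/8"
    using order_tendstoD(2)[OF rate, of "1/8"] unfolding u_def by simp
  ultimately have bound: "\<forall>\<^sub>F k in sequentially.
      (real (n k))^2 * exp (- (real (d k) powr \<eta>)\<^sup>2 / 2) \<le> exp (- u k / 4)"
    by eventually_elim (use sq_times_exp_neg_half_le in \<open>simp add: u_eq\<close>)
  have "((\<lambda>x::real. exp (- x / 4)) \<longlongrightarrow> 0) at_top" by real_asymp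
  from filterlim_compose[OF this u_lim] have lim: "(\<lambda>k. exp (- u k / 4)) \<longlonglongrightarrow> 0" .
  show ?thesis by (rule tendsto_sandwich[OF _ bound tendsto_const lim]) simp
qed

lemma cdf_ratio_slack_tendsto_0:
  fixes h D al au :: "nat \<Rightarrow> real"
  assumes "h \<longlonglongrightarrow> 0" "(\<lambda>k. h k * D k) \<longlonglongrightarrow> 0" "al \<longlonglongrightarrow> 0" "au \<longlonglongrightarrow> 0"
  shows "(\<lambda>k. cdf_ratio_slack (h k) (D k) (al k) (au k)) \<longlonglongrightarrow> 0"
proof -
  have "(\<lambda>k. (1 + au k) / (1 + al k) * exp (2 * h k + 4 * (h k * D k)) - 1)
      \<longlonglongrightarrow> (1 + 0) / (1 + 0) * exp (2 * 0 + 4 * 0) - 1"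
    by (intro tendsto_intros assms) simp
  then have "(\<lambda>k. (1 + au k) / (1 + al k) * exp (2 * h k * (1 + 2 * D k)) - 1) \<longlonglongrightarrow> 0"
    by (simp add: algebra_simps)
  from tendsto_max[OF tendsto_const[of 0] this] show ?thesis
    unfolding cdf_ratio_slack_def by simp
qed

lemma spacing_bound_tendsto_0:
  fixes n d :: "nat \<Rightarrow> nat" and \<sigma> \<eta> :: real and al au :: "nat \<Rightarrow> real"
  assumes "0 < \<sigma>" "0 < \<eta>" "\<eta> \<le> 1/6" "al \<longlonglongrightarrow> 0" "au \<longlonglongrightarrow> 0"
    and n_lim: "filterlim n at_top sequentially" and d_lim: "filterlim d at_top sequentially"
    and rate: "(\<lambda>k. ln (real (n k)) / real (d k) powr (2 * \<eta>)) \<longlonglongrightarrow> 0"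
  shows "(\<lambda>k. spacing_bound (\<sigma> * sqrt (real (d k))) (real (d k) powr \<eta>) (al k) (au k) (n k))
    \<longlonglongrightarrow> 0"
proof -
  define N where "N k = real (n k)" for k
  define D where "D k = real (d k) powr \<eta>" for k
  define h where "h k = 2 * ln (N k) / (\<sigma> * sqrt (real (d k)))" for k
  define \<epsilon> where "\<epsilon> k = cdf_ratio_slack (h k) (D k) (al k) (au k)" for k
  have N_lim: "filterlim N at_top sequentially"
    unfolding N_def by (rule filterlim_compose[OF filterlim_real_sequentially n_lim])
  have hD: "(\<lambda>k. h k * D k) \<longlonglongrightarrow> 0"
    using log_over_sqrt_times_powr_tendsto_0[OF assms(1,3) n_lim d_lim rate]
    unfolding h_def D_def N_def .
  have "\<forall>\<^sub>F k in sequentially. 1 \<le> n k \<and> 1 \<le> d k"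
    using n_lim d_lim unfolding filterlim_at_top by (auto intro: eventually_conj)
  then have "\<forall>\<^sub>F k in sequentially. 0 \<le> h k \<and> h k \<le> h k * D k"
  proof eventually_elim
    case (elim k)
    then have "0 \<le> h k" "1 \<le> D k"
      using assms(1,2) by (auto simp: h_def N_def D_def ge_one_powr_ge_zero)
    then show ?case using mult_left_mono[of 1 "D k" "h k"] by simp
  qed
  then have h_lim: "h \<longlonglongrightarrow> 0"
    by (intro tendsto_sandwich[OF _ _ tendsto_const hD]) (auto elim: eventually_mono)
  have \<epsilon>_lim: "\<epsilon> \<longlonglongrightarrow> 0"
    unfolding \<epsilon>_def using h_lim hD assms(4,5) by (rule cdf_ratio_slack_tendsto_0)
  have t1: "(\<lambda>k. 1 / N k) \<longlonglongrightarrow> 0"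
    by (rule tendsto_divide_0[OF tendsto_const filterlim_at_top_imp_at_infinity[OF N_lim]])
  have t2: "(\<lambda>k. N k * (N k - 1) * (2 * \<epsilon> k * ((1 + \<epsilon> k) / (N k - 2))^2)) \<longlonglongrightarrow> 0"
  proof -
    have "((\<lambda>x::real. x * (x - 1) / (x - 2)^2) \<longlongrightarrow> 1) at_top" by real_asymp
    then have "(\<lambda>k. N k * (N k - 1) / (N k - 2)^2) \<longlonglongrightarrow> 1"
      using filterlim_compose[OF _ N_lim] by blast
    moreover have "(\<lambda>k. 2 * \<epsilon> k * (1 + \<epsilon> k)^2) \<longlonglongrightarrow> 2 * 0 * (1 + 0)^2"
      by (intro tendsto_intros \<epsilon>_lim)
    ultimately have "(\<lambda>k. N k * (N k - 1) / (N k - 2)^2 * (2 * \<epsilon> k * (1 + \<epsilon> k)^2)) \<longlonglongrightarrow> 0"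
      using tendsto_mult by fastforce
    moreover have "N k * (N k - 1) * (2 * \<epsilon> k * ((1 + \<epsilon> k) / (N k - 2))^2)
        = N k * (N k - 1) / (N k - 2)^2 * (2 * \<epsilon> k * (1 + \<epsilon> k)^2)" for k
      by (simp only: power_divide) (simp add: divide_inverse mult_ac)
    ultimately show ?thesis by simp
  qed
  have t3: "(\<lambda>k. (N k)^2 * ((1 + au k) * exp (- (D k)\<^sup>2 / 2))) \<longlonglongrightarrow> 0"
    using tendsto_mult[OF sq_times_exp_neg_half_sq_powr_tendsto_0[OF assms(2) n_lim d_lim rate]
        tendsto_add[OF tendsto_const assms(5)]]
    unfolding N_def D_def by (simp add: mult_ac)
  have t4: "(\<lambda>k. N k * (5/6)^(n k)) \<longlonglongrightarrow> 0"
  proof -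
    have "(\<lambda>x::nat. real x * (5/6)^x) \<longlonglongrightarrow> 0" by real_asymp
    from filterlim_compose[OF this n_lim] show ?thesis unfolding N_def by (simp add: comp_def)
  qed
  from tendsto_add[OF tendsto_add[OF tendsto_add[OF t1 t2] t3] t4] show ?thesis
    unfolding spacing_bound_def Let_def \<epsilon>_def h_def N_def D_def by simp
qed

lemma eventually_spacing_conditions:
  fixes n d :: "nat \<Rightarrow> nat" and \<sigma> \<eta> :: real
  assumes "0 < \<sigma>" "0 < \<eta>" "\<eta> \<le> 1/6"
    and n_lim: "filterlim n at_top sequentially" and d_lim: "filterlim d at_top sequentially"
    and rate: "(\<lambda>k. ln (real (n k)) / real (d k) powr (2 * \<eta>)) \<longlonglongrightarrow> 0"
  shows "\<forall>\<^sub>F k in sequentially. 3 \<le> n k \<and> 0 < d k \<and> 1 \<le> real (d k) powr \<eta>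
    \<and> 4 * ln (real (n k)) / (\<sigma> * sqrt (real (d k))) \<le> real (d k) powr \<eta>"
proof -
  have "\<forall>\<^sub>F k in sequentially. 3 \<le> n k" using n_lim unfolding filterlim_at_top by blast
  moreover have "\<forall>\<^sub>F k in sequentially. 1 \<le> d k" using d_lim unfolding filterlim_at_top by blast
  moreover have "\<forall>\<^sub>F k in sequentially.
      2 * ln (real (n k)) / (\<sigma> * sqrt (real (d k))) * real (d k) powr \<eta> < 1/2"
    using order_tendstoD(2)[OF log_over_sqrt_times_powr_tendsto_0[OF assms(1,3) n_lim d_lim rate],
        of "1/2"]
    by simp
  ultimately show ?thesis
  proof eventually_elim
    case (elim k)
    define h where "h = 2 * ln (real (n k)) / (\<sigma> * sqrt (real (d k)))"
    have "1 \<le> real (d k) powr \<eta>" using elim assms(2) by (simp add: ge_one_powr_ge_zero)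
    moreover have "0 \<le> h" using elim assms(1) by (simp add: h_def)
    ultimately have "2 * h \<le> real (d k) powr \<eta>"
      using elim mult_left_mono[of 1 "real (d k) powr \<eta>" h] unfolding h_def[symmetric] by linarith
    then show ?case using elim \<open>1 \<le> real (d k) powr \<eta>\<close> by (simp add: h_def)
  qed
qed

theorem lemma3p1:
  fixes \<sigma> \<eta> :: real
    and n d :: "nat \<Rightarrow> nat"
    and M :: "nat \<Rightarrow> 'a measure"
    and S :: "nat \<Rightarrow> nat \<Rightarrow> 'a \<Rightarrow> real"
    and G :: "nat \<Rightarrow> real \<Rightarrow> real"
    and \<alpha>l \<alpha>u :: "nat \<Rightarrow> real"
  assumes sigma_pos: "\<sigma> > 0"
    and eta: "0 < \<eta>" "\<eta> < 1 / 6"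
    and prob: "\<And>k. prob_space (M k)"
    and meas: "\<And>k i. i < n k \<Longrightarrow> S k i \<in> borel_measurable (M k)"
    and indep: "\<And>k. prob_space.indep_vars (M k) (\<lambda>_. borel) (S k) {..<n k}"
    and cdf_G: "\<And>k i. i < n k \<Longrightarrow> cdf (distr (M k) borel (S k i)) = G (d k)"
    and alpha_l: "\<alpha>l \<longlonglongrightarrow> 0"
    and alpha_u: "\<alpha>u \<longlonglongrightarrow> 0"
    and bounds: "\<And>k s. - (real (d k) powr \<eta>) \<le> s \<Longrightarrow> s \<le> real (d k) powr \<eta> \<Longrightarrow>
        (1 + \<alpha>l k) * std_normal_cdf s \<le> G (d k) s \<and> G (d k) s \<le> (1 + \<alpha>u k) * std_normal_cdf s"
    and n_lim: "filterlim n at_top sequentially"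
    and d_lim: "filterlim d at_top sequentially"
    and rate: "(\<lambda>k. ln (real (n k)) / real (d k) powr (2 * \<eta>)) \<longlonglongrightarrow> 0"
  shows "\<forall>\<epsilon>>0. (\<lambda>k. measure (M k)
           {\<omega> \<in> space (M k).
              \<bar>real_cond_exp (M k)
                 (vimage_algebra (space (M k)) (\<lambda>\<omega>. order_stat (\<lambda>i. S k i \<omega>) (n k) 1) borel)
                 (\<lambda>\<omega>. T_stat \<sigma> (n k) (d k) (\<lambda>i. S k i \<omega>)) \<omega>\<bar> > \<epsilon>}) \<longlonglongrightarrow> 0"
proof (intro allI impI)
  fix \<epsilon> :: real assume "0 < \<epsilon>"
  define Pm where "Pm k = measure (M k)
           {\<omega> \<in> space (M k).
              \<bar>real_cond_exp (M k)
                 (vimage_algebra (space (M k)) (\<lambda>\<omega>. order_stat (\<lambda>i. S k i \<omega>) (n k) 1) borel)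
                 (\<lambda>\<omega>. T_stat \<sigma> (n k) (d k) (\<lambda>i. S k i \<omega>)) \<omega>\<bar> > \<epsilon>}" for k
  define B where "B k = spacing_bound (\<sigma> * sqrt (real (d k))) (real (d k) powr \<eta>) (\<alpha>l k) (\<alpha>u k) (n k)"
    for k
  have "\<forall>\<^sub>F k in sequentially. 3 \<le> n k \<and> 0 < d k \<and> 1 \<le> real (d k) powr \<eta>
      \<and> 4 * ln (real (n k)) / (\<sigma> * sqrt (real (d k))) \<le> real (d k) powr \<eta>"
    using eventually_spacing_conditions[OF sigma_pos eta(1) _ n_lim d_lim rate] eta(2) by simp
  moreover have "\<forall>\<^sub>F k in sequentially. -1/2 < \<alpha>l k" "\<forall>\<^sub>F k in sequentially. -1/2 < \<alpha>u k"
    using order_tendstoD(1)[OF alpha_l] order_tendstoD(1)[OF alpha_u] by simp_all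
  ultimately have Pm_le: "\<forall>\<^sub>F k in sequentially. Pm k \<le> B k / \<epsilon>"
  proof eventually_elim
    case (elim k)
    interpret iid_sample "M k" "S k" "n k" "G (d k)"
      using elim by (intro iid_sample.intro iid_sample_axioms.intro prob meas indep cdf_G) auto
    show ?case unfolding Pm_def B_def using elim bounds sigma_pos \<open>0 < \<epsilon>\<close>
      by (intro prob_cond_exp_T_stat_gt_le) auto
  qed
  have "(\<lambda>k. B k / \<epsilon>) \<longlonglongrightarrow> 0 / \<epsilon>"
    unfolding B_def using eta(2) \<open>0 < \<epsilon>\<close> by (intro tendsto_divide tendsto_const spacing_bound_tendsto_0
        sigma_pos eta(1) alpha_l alpha_u n_lim d_lim rate) auto
  then show "Pm \<longlonglongrightarrow> 0"
    by (intro tendsto_sandwich[OF _ Pm_le tendsto_const]) (auto simp: Pm_def)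
qed

end
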